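(* (i) For every $L>0$, $\Delta\mapsto\mathrm P_\Delta(\hat\tau_{\rm ST}-\tau\le L(1+\gamma)^{-1/2}\sigma_0)$ is monotonically decreasing in $\Delta$. (ii) For every $t\in\mathbb R$ and $L$, with $c=c_{\alpha/2}$, \begin{align*} &\mathrm P_{\Delta/\sigma_0=t}\big(\hat\tau_{\rm ST}-\tau\le L(1+\gamma)^{-1/2}\sigma_0\big)\\ ={}&\Big[\Phi\big(c-\sqrt{\tfrac{\gamma}{1+\gamma}}t\big)-\Phi\big(-c-\sqrt{\tfrac{\gamma}{1+\gamma}}t\big)\Big]\Phi\big(L-\tfrac{\gamma}{\sqrt{1+\gamma}}t\big)\\ &+\int_{-\infty}^{-c-\sqrt{\frac{\gamma}{1+\gamma}}t}\Phi(L+\sqrt\gamma(u+c))\phi(u)\,du+\int_{c-\sqrt{\frac{\gamma}{1+\gamma}}t}^{\infty}\Phi(L+\sqrt\gamma(u-c))\phi(u)\,du. \end{align*} (iii) Let $\hat L'_{\rm ST}$ be the solution in $L$ of $\mathrm P_{\Delta/\sigma_0=b}\big(\hat\tau_{\rm ST}-\tau\le L(1+\gamma)^{-1/2}\sigma_0\big)=1-\zeta$. Then $[\hat\tau_{\rm ST}-\hat L'_{\rm ST}(1+\gamma)^{-1/2}\sigma_0,\infty)$ is the shortest lower confidence bound of this form with coverage at least $1-\zeta$ uniformly over $|\Delta/\sigma_0|\le b$.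
   Context: Let $\tau\in\mathbb R$ be an unknown parameter and $\Delta\in\mathbb R$ an unknown bias. Let $\sigma_0,\sigma_1>0$ be known. We observe independent random variables $\hat\tau_0\sim N(\tau,\sigma_0^2)$ and $\hat\tau_1\sim N(\tau+\Delta,\sigma_1^2)$. Define $\gamma=\sigma_0^2/\sigma_1^2$ and $\sigma=\sqrt{\sigma_0^2+\sigma_1^2}$. Write $\Phi$ and $\phi$ for the standard normal CDF and density. For $a\in(0,1)$, let $c_a=\Phi^{-1}(1-a)$. Fix $\alpha,\zeta\in(0,1)$ and $b\ge0$. The soft-thresholding estimator is \[ \hat\tau_{\rm ST}=\hat\tau_0+\frac{\gamma}{1+\gamma}(\hat\tau_1-\hat\tau_0)\mathbf 1(|\hat\tau_1-\hat\tau_0|\le\sigma c_{\alpha/2})+\frac{\gamma}{1+\gamma}\sigma c_{\alpha/2}\,\mathrm{sign}(\hat\tau_1-\hat\tau_0)\mathbf 1(|\hat\tau_1-\hat\tau_0|>\sigma c_{\alpha/2}). \] $\mathrm P_\Delta$ denotes probability under bias $\Delta$, and $\mathrm P_{\Delta/\sigma_0=t}$ means probability under $\Delta=t\sigma_0$. *)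

theory Defs
  imports "HOL-Probability.Probability"
begin

definition phi :: "real \<Rightarrow> real" where
  "phi x = std_normal_density x"

definition Phi :: "real \<Rightarrow> real" where
  "Phi x = measure (density lborel std_normal_density) {..x}"

definition cq :: "real \<Rightarrow> real" where
  "cq a = (THE c. Phi c = 1 - a)"

definition tau_ST :: "real \<Rightarrow> real \<Rightarrow> real \<Rightarrow> real \<Rightarrow> real \<Rightarrow> real" where
  "tau_ST s0 s1 \<alpha> x0 x1 =
     (let \<gamma> = s0\<^sup>2 / s1\<^sup>2; \<sigma> = sqrt (s0\<^sup>2 + s1\<^sup>2); c = cq (\<alpha> / 2); d = x1 - x0 in
      x0 + \<gamma> / (1 + \<gamma>) * d * (if \<bar>d\<bar> \<le> \<sigma> * c then 1 else 0)
         + \<gamma> / (1 + \<gamma>) * \<sigma> * c * sgn d * (if \<bar>d\<bar> > \<sigma> * c then 1 else 0))"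

text \<open>Joint law of independent (tau0hat, tau1hat) with tau0hat ~ N(tau, s0^2),
  tau1hat ~ N(tau + Delta, s1^2).\<close>
definition obs_law :: "real \<Rightarrow> real \<Rightarrow> real \<Rightarrow> real \<Rightarrow> (real \<times> real) measure" where
  "obs_law s0 s1 \<tau> \<Delta> =
     density lborel (normal_density \<tau> s0) \<Otimes>\<^sub>M density lborel (normal_density (\<tau> + \<Delta>) s1)"

definition cover_prob :: "real \<Rightarrow> real \<Rightarrow> real \<Rightarrow> real \<Rightarrow> real \<Rightarrow> real \<Rightarrow> real" where
  "cover_prob s0 s1 \<alpha> \<tau> \<Delta> L =
     measure (obs_law s0 s1 \<tau> \<Delta>)
       {p. tau_ST s0 s1 \<alpha> (fst p) (snd p) - \<tau> \<le> L * s0 / sqrt (1 + s0\<^sup>2 / s1\<^sup>2)}"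

end

theory Submission
  imports Defs
begin

text \<open>
  The difference \<open>D = \<tau>1 - \<tau>0\<close> of the two estimates is \<open>N(\<Delta>, \<sigma>\<^sup>2)\<close> with
  \<open>\<sigma>\<^sup>2 = \<sigma>0\<^sup>2 + \<sigma>1\<^sup>2\<close>, and conditionally on \<open>D\<close> the estimate \<open>\<tau>0\<close> is normal with variance
  \<open>\<sigma>0\<^sup>2 \<sigma>1\<^sup>2 / \<sigma>\<^sup>2\<close> and a mean affine in \<open>D\<close>. Since soft thresholding only adds a multiple
  of the clipped difference to \<open>\<tau>0\<close>, writing \<open>D = \<Delta> + \<sigma> U\<close> turns the normalised error
  \<open>(\<tau>_ST - \<tau>) (1 + \<gamma>)\<^sup>1\<^sup>/\<^sup>2 / \<sigma>0\<close> into \<open>V + g\<^sub>\<Delta>(U)\<close>, where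
  \<open>g\<^sub>\<Delta>(u) = \<surd>\<gamma> (clip c (\<Delta>/\<sigma> + u) - u)\<close> and \<open>U\<close>, \<open>V\<close> are independent standard normal. The coverage probability is therefore the Gaussian mixture
  \<open>E \<Phi>(L - g\<^sub>\<Delta>(U))\<close>: it increases strictly and continuously in \<open>L\<close> from 0 to 1, which gives the
  unique \<open>L'\<close>, and it decreases in \<open>\<Delta>\<close> because clipping is monotone, which gives (i) and makes
  \<open>\<Delta> = b \<sigma>0\<close> the worst case in (iii). Splitting the expectation along the three branches of the
  clip gives the closed form (ii).
\<close>

section \<open>Standard normal distribution\<close>

interpretation std_normal: real_distribution std_normal_distribution
  by (rule real_dist_normal_dist)

lemma Phi_eq_cdf: "Phi = cdf std_normal_distribution"
  by (auto simp: Phi_def cdf_def)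

lemma Phi_nonneg: "0 \<le> Phi x"
  by (simp add: Phi_def)

lemma Phi_le_1: "Phi x \<le> 1"
  by (simp add: Phi_eq_cdf std_normal.cdf_bounded_prob)

lemma Phi_mono: "x \<le> y \<Longrightarrow> Phi x \<le> Phi y"
  by (simp add: Phi_eq_cdf std_normal.cdf_nondecreasing)

lemma Phi_at_top: "(Phi \<longlongrightarrow> 1) at_top"
  by (simp add: Phi_eq_cdf std_normal.cdf_lim_at_top_prob)

lemma Phi_at_bot: "(Phi \<longlongrightarrow> 0) at_bot"
  by (simp add: Phi_eq_cdf std_normal.cdf_lim_at_bot)

lemma Phi_measurable [measurable]: "Phi \<in> borel_measurable borel"
  by (rule borel_measurable_mono) (simp add: mono_def Phi_mono)

lemma emeasure_std_normal:
  "A \<in> sets borel \<Longrightarrow>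
    emeasure std_normal_distribution A = (\<integral>\<^sup>+t. ennreal (std_normal_density t) * indicator A t \<partial>lborel)"
  by (subst emeasure_density) (auto intro!: nn_integral_cong simp: indicator_def)

lemma measure_std_normal_greaterThanAtMost:
  "x \<le> y \<Longrightarrow> measure std_normal_distribution {x<..y} = Phi y - Phi x"
  by (cases "x = y") (simp_all add: Phi_eq_cdf std_normal.cdf_diff_eq)

lemma std_normal_density_le_1: "std_normal_density x \<le> 1"
proof -
  have "1 / sqrt (2 * pi) \<le> 1"
    using pi_gt3 by (simp add: divide_le_eq_1 real_le_rsqrt)
  moreover have "exp (- x\<^sup>2 / 2) \<le> 1" by simp
  ultimately show ?thesis
    unfolding std_normal_density_def by (metis exp_gt_zero less_eq_real_def mult_le_one)
qed

lemma std_normal_density_abs_antimono: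
  "\<bar>x\<bar> \<le> \<bar>y\<bar> \<Longrightarrow> std_normal_density y \<le> std_normal_density x"
  unfolding std_normal_density_def
  by (auto intro!: mult_left_mono simp: divide_le_cancel abs_le_square_iff)

lemma Phi_diff_le:
  assumes "x \<le> y" shows "Phi y - Phi x \<le> y - x"
proof -
  have "ennreal (Phi y - Phi x) = emeasure std_normal_distribution {x<..y}"
    using assms by (simp add: std_normal.emeasure_eq_measure measure_std_normal_greaterThanAtMost)
  also have "\<dots> = (\<integral>\<^sup>+t. ennreal (std_normal_density t) * indicator {x<..y} t \<partial>lborel)"
    by (simp add: emeasure_std_normal)
  also have "\<dots> \<le> (\<integral>\<^sup>+t. indicator {x<..y} t \<partial>lborel)"
    by (intro nn_integral_mono) (auto simp: indicator_def std_normal_density_le_1)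
  also have "\<dots> = ennreal (y - x)" using assms by simp
  finally show ?thesis using assms by (simp add: ennreal_le_iff)
qed

lemma Phi_lipschitz: "1-lipschitz_on UNIV Phi"
proof (rule lipschitz_onI)
  fix x y :: real
  show "dist (Phi x) (Phi y) \<le> 1 * dist x y"
    using Phi_diff_le[of x y] Phi_diff_le[of y x] Phi_mono[of x y] Phi_mono[of y x]
    by (cases "x \<le> y") (auto simp: dist_real_def)
qed simp

lemma isCont_Phi: "isCont Phi x"
  using lipschitz_on_continuous_on[OF Phi_lipschitz] by (simp add: continuous_on_eq_continuous_at)

lemma Phi_strict_mono: "strict_mono Phi"
proof (rule strict_monoI)
  fix x y :: real assume "x < y"
  define m where "m = std_normal_density (\<bar>x\<bar> + \<bar>y\<bar>)"
  have "m > 0" unfolding m_def by (rule normal_density_pos) simp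
  have "ennreal (m * (y - x)) = (\<integral>\<^sup>+t. ennreal m * indicator {x<..y} t \<partial>lborel)"
    using \<open>x < y\<close> \<open>m > 0\<close> by (simp add: nn_integral_cmult ennreal_mult)
  also have "\<dots> \<le> emeasure std_normal_distribution {x<..y}"
    unfolding m_def
    by (subst emeasure_std_normal) (auto intro!: nn_integral_mono std_normal_density_abs_antimono simp: indicator_def)
  also have "\<dots> = ennreal (Phi y - Phi x)"
    using \<open>x < y\<close> by (simp add: std_normal.emeasure_eq_measure measure_std_normal_greaterThanAtMost)
  finally have "m * (y - x) \<le> Phi y - Phi x"
    using \<open>x < y\<close> Phi_mono[of x y] by (simp add: ennreal_le_iff)
  moreover have "m * (y - x) > 0" using \<open>m > 0\<close> \<open>x < y\<close> by simp
  ultimately show "Phi x < Phi y" by simp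
qed

lemma measure_std_normal_singleton: "measure std_normal_distribution {x} = 0"
  using std_normal.isCont_cdf[of x] isCont_Phi[of x] by (simp add: Phi_eq_cdf)

lemma measure_std_normal_greaterThanLessThan:
  assumes "x < y" shows "measure std_normal_distribution {x<..<y} = Phi y - Phi x"
proof -
  have "measure std_normal_distribution {x<..y} = measure std_normal_distribution ({x<..<y} \<union> {y})"
    using assms by (simp only: ivl_disj_un_singleton(4))
  also have "\<dots> = measure std_normal_distribution {x<..<y}"
    by (subst std_normal.finite_measure_Union) (auto simp: measure_std_normal_singleton)
  finally show ?thesis
    using assms by (simp add: measure_std_normal_greaterThanAtMost)
qed

lemma measure_std_normal_lessThan: "measure std_normal_distribution {..<x} = Phi x"
proof -
  have "Phi x = measure std_normal_distribution ({..<x} \<union> {x})"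
    by (simp only: Phi_def ivl_disj_un_singleton(2))
  also have "\<dots> = measure std_normal_distribution {..<x}"
    by (subst std_normal.finite_measure_Union) (auto simp: measure_std_normal_singleton)
  finally show ?thesis ..
qed

lemma Phi_minus: "Phi (- x) = 1 - Phi x"
proof -
  have "emeasure std_normal_distribution {..-x} = (\<integral>\<^sup>+t. ennreal (std_normal_density t) * indicator {..-x} t \<partial>lborel)"
    by (simp add: emeasure_std_normal)
  also have "\<dots> = (\<integral>\<^sup>+t. ennreal (std_normal_density (- t)) * indicator {..-x} (- t) \<partial>lborel)"
    by (subst nn_integral_real_affine[where c="-1" and t=0]) auto
  also have "\<dots> = (\<integral>\<^sup>+t. ennreal (std_normal_density t) * indicator {x..} t \<partial>lborel)"
    by (intro nn_integral_cong) (auto simp: std_normal_density_def indicator_def)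
  also have "\<dots> = emeasure std_normal_distribution {x..}"
    by (simp add: emeasure_std_normal)
  finally have "Phi (- x) = measure std_normal_distribution (space std_normal_distribution - {..<x})"
    by (simp add: Phi_def std_normal.emeasure_eq_measure Compl_eq_Diff_UNIV[symmetric])
  also have "\<dots> = 1 - measure std_normal_distribution {..<x}"
    by (rule std_normal.prob_compl) simp
  also have "measure std_normal_distribution {..<x} = Phi x"
    by (rule measure_std_normal_lessThan)
  finally show ?thesis .
qed

lemma set_integral_std_normal_density:
  assumes "A \<in> sets borel"
  shows "(LINT u:A|lborel. std_normal_density u) = measure std_normal_distribution A"
proof -
  have "measure std_normal_distribution A = (\<integral>u. indicator A u \<partial>std_normal_distribution)"
    using assms by simp
  also have "\<dots> = (\<integral>u. std_normal_density u * indicator A u \<partial>lborel)"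
    using assms by (subst integral_density) auto
  finally show ?thesis
    by (simp add: set_lebesgue_integral_def mult.commute)
qed

lemma integrable_Phi_mult_std_normal_density:
  assumes [measurable]: "g \<in> borel_measurable borel"
  shows "integrable lborel (\<lambda>u. Phi (g u) * std_normal_density u)"
  by (rule Bochner_Integration.integrable_bound[where f=std_normal_density])
    (auto intro!: mult_left_le_one_le simp: Phi_nonneg Phi_le_1)

lemma strict_mono_continuous_ex1_eq:
  fixes F :: "real \<Rightarrow> real"
  assumes cont: "continuous_on UNIV F" and mono: "strict_mono F"
    and "(F \<longlongrightarrow> 0) at_bot" "(F \<longlongrightarrow> 1) at_top" "0 < p" "p < 1"
  shows "\<exists>!x. F x = p"
proof -
  obtain lo where "F lo < p"
    using order_tendstoD(2)[OF assms(3) \<open>0 < p\<close>] by (auto simp: eventually_at_bot_linorder)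
  obtain hi where "p < F hi"
    using order_tendstoD(1)[OF assms(4) \<open>p < 1\<close>] by (auto simp: eventually_at_top_linorder)
  then have "p \<le> F (max lo hi)"
    using strict_mono_mono[OF mono] by (smt (verit) max.cobounded2 monoD)
  moreover have "lo \<le> max lo hi" by simp
  ultimately obtain x where "F x = p"
    using IVT[of F lo p "max lo hi"] \<open>F lo < p\<close> continuous_on_interior[OF cont] by force
  then show ?thesis
    using strict_mono_eq[OF mono] by (intro ex1I[of _ x]) auto
qed

lemma Phi_cq: "0 < a \<Longrightarrow> a < 1 \<Longrightarrow> Phi (cq a) = 1 - a"
  unfolding cq_def
  by (rule theI', rule strict_mono_continuous_ex1_eq)
    (auto simp: continuous_on_eq_continuous_at isCont_Phi Phi_strict_mono Phi_at_bot Phi_at_top)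

lemma cq_pos: "0 < a \<Longrightarrow> a < 1/2 \<Longrightarrow> 0 < cq a"
  using Phi_cq[of a] Phi_minus[of 0] strict_mono_less[OF Phi_strict_mono, of 0 "cq a"] by simp

section \<open>Gaussian location mixtures\<close>

text \<open>The distribution function of \<open>g U + V\<close> for independent standard normal \<open>U\<close> and \<open>V\<close>.\<close>

definition normal_mixture_cdf :: "(real \<Rightarrow> real) \<Rightarrow> real \<Rightarrow> real" where
  "normal_mixture_cdf g L = (\<integral>u. Phi (L - g u) \<partial>std_normal_distribution)"

lemma integrable_Phi_std_normal [simp]:
  "g \<in> borel_measurable borel \<Longrightarrow> integrable std_normal_distribution (\<lambda>u. Phi (L - g u))"
  by (rule std_normal.integrable_const_bound[where B=1]) (auto simp: Phi_nonneg Phi_le_1)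

lemma normal_mixture_cdf_lborel:
  assumes "g \<in> borel_measurable borel"
  shows "normal_mixture_cdf g L = (\<integral>u. Phi (L - g u) * std_normal_density u \<partial>lborel)"
  using assms by (simp add: normal_mixture_cdf_def integral_density mult.commute)

lemma normal_mixture_cdf_antimono:
  assumes [measurable]: "g \<in> borel_measurable borel" "h \<in> borel_measurable borel"
    and "\<And>u. g u \<le> h u"
  shows "normal_mixture_cdf h L \<le> normal_mixture_cdf g L"
  unfolding normal_mixture_cdf_def
  using assms(3) by (intro integral_mono) (auto intro: Phi_mono)

lemma normal_mixture_cdf_strict_mono:
  assumes [measurable]: "g \<in> borel_measurable borel"
  shows "strict_mono (normal_mixture_cdf g)"
proof (rule strict_monoI)
  fix L L' :: real assume "L < L'"
  then show "normal_mixture_cdf g L < normal_mixture_cdf g L'"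
    unfolding normal_mixture_cdf_def
    by (intro std_normal.integral_less_AE_space)
      (auto intro!: AE_I2 strict_monoD[OF Phi_strict_mono] simp: std_normal.emeasure_space_1[simplified])
qed

lemma normal_mixture_cdf_lipschitz:
  assumes [measurable]: "g \<in> borel_measurable borel"
  shows "1-lipschitz_on UNIV (normal_mixture_cdf g)"
proof (rule lipschitz_onI)
  fix L L' :: real
  have "\<bar>normal_mixture_cdf g L - normal_mixture_cdf g L'\<bar>
      = \<bar>\<integral>u. Phi (L - g u) - Phi (L' - g u) \<partial>std_normal_distribution\<bar>"
    by (simp add: normal_mixture_cdf_def)
  also have "\<dots> \<le> (\<integral>u. \<bar>L - L'\<bar> \<partial>std_normal_distribution)"
    using lipschitz_onD[OF Phi_lipschitz, of "L - g u" "L' - g u" for u]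
    by (intro integral_abs_bound_integral) (auto simp: dist_real_def)
  finally show "dist (normal_mixture_cdf g L) (normal_mixture_cdf g L') \<le> 1 * dist L L'"
    by (simp add: dist_real_def std_normal.prob_space[simplified])
qed simp

lemma normal_mixture_cdf_at_top:
  assumes [measurable]: "g \<in> borel_measurable borel"
  shows "(normal_mixture_cdf g \<longlongrightarrow> 1) at_top"
proof -
  have "((\<lambda>L. \<integral>u. Phi (L - g u) \<partial>std_normal_distribution) \<longlongrightarrow> (\<integral>u. 1 \<partial>std_normal_distribution)) at_top"
  proof (rule integral_dominated_convergence_at_top[where w="\<lambda>_. 1"])
    show "AE u in std_normal_distribution. ((\<lambda>L. Phi (L - g u)) \<longlongrightarrow> 1) at_top"
      by (intro AE_I2 filterlim_compose[OF Phi_at_top]) real_asymp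
    show "\<forall>\<^sub>F L in at_top. AE u in std_normal_distribution. norm (Phi (L - g u)) \<le> 1"
      by (simp add: Phi_nonneg Phi_le_1)
  qed auto
  then show ?thesis
    by (simp add: normal_mixture_cdf_def[abs_def] std_normal.prob_space[simplified])
qed

lemma normal_mixture_cdf_at_bot:
  assumes [measurable]: "g \<in> borel_measurable borel"
  shows "(normal_mixture_cdf g \<longlongrightarrow> 0) at_bot"
proof -
  have "((\<lambda>L. \<integral>u. Phi (- L - g u) \<partial>std_normal_distribution) \<longlongrightarrow> (\<integral>u. 0 \<partial>std_normal_distribution)) at_top"
  proof (rule integral_dominated_convergence_at_top[where w="\<lambda>_. 1"])
    show "AE u in std_normal_distribution. ((\<lambda>L. Phi (- L - g u)) \<longlongrightarrow> 0) at_top"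
      by (intro AE_I2 filterlim_compose[OF Phi_at_bot]) real_asymp
    show "\<forall>\<^sub>F L in at_top. AE u in std_normal_distribution. norm (Phi (- L - g u)) \<le> 1"
      by (simp add: Phi_nonneg Phi_le_1)
  qed auto
  then show ?thesis
    by (simp add: filterlim_at_bot_mirror normal_mixture_cdf_def[abs_def])
qed

lemma normal_mixture_cdf_ex1_eq:
  assumes "g \<in> borel_measurable borel" "0 < p" "p < 1"
  shows "\<exists>!L. normal_mixture_cdf g L = p"
  using assms lipschitz_on_continuous_on[OF normal_mixture_cdf_lipschitz]
  by (intro strict_mono_continuous_ex1_eq)
    (auto intro: normal_mixture_cdf_strict_mono normal_mixture_cdf_at_top normal_mixture_cdf_at_bot)

section \<open>Conditioning a pair of independent normals on their difference\<close>

lemma gaussian_exponent_split: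
  fixes A B e f :: real
  assumes "A > 0" "B > 0"
  shows "- e\<^sup>2 / (2 * A) + - (e + f)\<^sup>2 / (2 * B)
    = - f\<^sup>2 / (2 * (A + B)) + - (e + A / (A + B) * f)\<^sup>2 / (2 * (A * B / (A + B)))"
proof -
  have "A + B \<noteq> 0" "A \<noteq> 0" "B \<noteq> 0" using assms by simp_all
  then show ?thesis
    by (simp add: divide_simps) (simp add: power2_eq_square algebra_simps)
qed

lemma normal_density_mult_shift:
  assumes "s0 > 0" "s1 > 0"
  defines "\<sigma> \<equiv> sqrt (s0\<^sup>2 + s1\<^sup>2)"
  shows "normal_density \<mu>0 s0 x * normal_density \<mu>1 s1 (x + d)
    = normal_density (\<mu>1 - \<mu>0) \<sigma> d
      * normal_density (\<mu>0 - s0\<^sup>2 / (s0\<^sup>2 + s1\<^sup>2) * (d - (\<mu>1 - \<mu>0))) (s0 * s1 / \<sigma>) x"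
proof -
  have "\<sigma> > 0" "\<sigma>\<^sup>2 = s0\<^sup>2 + s1\<^sup>2"
    using assms by (simp_all add: add_pos_nonneg)
  then have var: "(s0 * s1 / \<sigma>)\<^sup>2 = s0\<^sup>2 * s1\<^sup>2 / (s0\<^sup>2 + s1\<^sup>2)"
    by (simp add: power_divide power_mult_distrib)
  have "(2 * pi * s0\<^sup>2) * (2 * pi * s1\<^sup>2) = (2 * pi * \<sigma>\<^sup>2) * (2 * pi * (s0 * s1 / \<sigma>)\<^sup>2)"
    using \<open>\<sigma> > 0\<close> by (simp add: power_divide power_mult_distrib)
  then have prefactor: "1 / sqrt (2 * pi * s0\<^sup>2) * (1 / sqrt (2 * pi * s1\<^sup>2))
      = 1 / sqrt (2 * pi * \<sigma>\<^sup>2) * (1 / sqrt (2 * pi * (s0 * s1 / \<sigma>)\<^sup>2))"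
    by (metis real_sqrt_mult times_divide_times_eq mult_1)
  have exponent: "- (x - \<mu>0)\<^sup>2 / (2 * s0\<^sup>2) + - (x + d - \<mu>1)\<^sup>2 / (2 * s1\<^sup>2)
      = - (d - (\<mu>1 - \<mu>0))\<^sup>2 / (2 * \<sigma>\<^sup>2)
        + - (x - (\<mu>0 - s0\<^sup>2 / (s0\<^sup>2 + s1\<^sup>2) * (d - (\<mu>1 - \<mu>0))))\<^sup>2 / (2 * (s0 * s1 / \<sigma>)\<^sup>2)"
    using gaussian_exponent_split[of "s0\<^sup>2" "s1\<^sup>2" "x - \<mu>0" "d - (\<mu>1 - \<mu>0)"] assms
    unfolding var \<open>\<sigma>\<^sup>2 = _\<close> by (simp add: algebra_simps)
  show ?thesis
    unfolding normal_density_def using prefactor exponent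
    by (simp add: exp_add[symmetric] mult_ac del: exp_add)
qed

lemma nn_integral_normal_density_affine:
  assumes "s > 0" and [measurable]: "g \<in> borel_measurable borel"
  shows "(\<integral>\<^sup>+x. ennreal (normal_density m s x) * g x \<partial>lborel)
       = (\<integral>\<^sup>+u. ennreal (std_normal_density u) * g (m + s * u) \<partial>lborel)"
proof -
  have density: "normal_density m s (m + s * u) = std_normal_density u / s" for u
    using assms by (simp add: normal_density_def real_sqrt_mult power_mult_distrib field_simps)
  have "(\<integral>\<^sup>+x. ennreal (normal_density m s x) * g x \<partial>lborel)
      = ennreal s * (\<integral>\<^sup>+u. ennreal (std_normal_density u / s) * g (m + s * u) \<partial>lborel)"
    using nn_integral_real_affine[where c=s and t=m and f="\<lambda>x. ennreal (normal_density m s x) * g x"] assms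
    by (simp add: density)
  also have "\<dots> = (\<integral>\<^sup>+u. ennreal (std_normal_density u) * g (m + s * u) \<partial>lborel)"
    using assms by (subst nn_integral_cmult[symmetric])
      (auto intro!: nn_integral_cong simp: ennreal_mult'[symmetric] mult.assoc[symmetric])
  finally show ?thesis .
qed

lemma nn_integral_normal_density_atMost:
  assumes "s > 0"
  shows "(\<integral>\<^sup>+x. ennreal (normal_density m s x) * indicator {..B} x \<partial>lborel) = ennreal (Phi ((B - m) / s))"
proof -
  have "(\<integral>\<^sup>+x. ennreal (normal_density m s x) * indicator {..B} x \<partial>lborel)
      = (\<integral>\<^sup>+u. ennreal (std_normal_density u) * indicator {..(B - m) / s} u \<partial>lborel)"
    using assms by (subst nn_integral_normal_density_affine)
      (auto intro!: nn_integral_cong simp: indicator_def field_simps)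
  also have "\<dots> = emeasure std_normal_distribution {..(B - m) / s}"
    by (subst emeasure_density) auto
  finally show ?thesis
    by (simp add: Phi_def std_normal.emeasure_eq_measure)
qed

lemma nn_integral_normal_pair_by_difference:
  fixes \<mu> \<delta> s0 s1 :: real
  assumes "s0 > 0" "s1 > 0" and [measurable]: "f \<in> borel_measurable (borel \<Otimes>\<^sub>M borel)"
  shows "(\<integral>\<^sup>+p. f p \<partial>(density lborel (normal_density \<mu> s0) \<Otimes>\<^sub>M density lborel (normal_density (\<mu> + \<delta>) s1)))
    = (\<integral>\<^sup>+d. ennreal (normal_density \<delta> (sqrt (s0\<^sup>2 + s1\<^sup>2)) d)
          * (\<integral>\<^sup>+x. ennreal (normal_density (\<mu> - s0\<^sup>2 / (s0\<^sup>2 + s1\<^sup>2) * (d - \<delta>)) (s0 * s1 / sqrt (s0\<^sup>2 + s1\<^sup>2)) x)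
            * f (x, x + d) \<partial>lborel) \<partial>lborel)" (is "_ = ?rhs")
proof -
  let ?n0 = "normal_density \<mu> s0" and ?n1 = "normal_density (\<mu> + \<delta>) s1"
  interpret M1: prob_space "density lborel ?n1"
    using \<open>s1 > 0\<close> by (rule prob_space_normal_density)
  have sets: "sets (density lborel ?n0 \<Otimes>\<^sub>M density lborel ?n1) = sets (borel \<Otimes>\<^sub>M borel)"
    by (intro sets_pair_measure_cong) auto
  have "(\<integral>\<^sup>+p. f p \<partial>(density lborel ?n0 \<Otimes>\<^sub>M density lborel ?n1))
      = (\<integral>\<^sup>+x. \<integral>\<^sup>+y. f (x, y) \<partial>density lborel ?n1 \<partial>density lborel ?n0)"
    by (rule M1.nn_integral_fst[symmetric]) (simp add: measurable_cong_sets[OF sets refl])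
  also have "\<dots> = (\<integral>\<^sup>+x. ennreal (?n0 x) * (\<integral>\<^sup>+y. ennreal (?n1 y) * f (x, y) \<partial>lborel) \<partial>lborel)"
    by (subst nn_integral_density) (auto simp: nn_integral_density)
  also have "\<dots> = (\<integral>\<^sup>+x. ennreal (?n0 x) * (\<integral>\<^sup>+d. ennreal (?n1 (x + d)) * f (x, x + d) \<partial>lborel) \<partial>lborel)"
  proof (intro nn_integral_cong)
    fix x
    have "(\<lambda>y. ennreal (?n1 y) * f (x, y)) \<in> borel_measurable borel"
      by measurable
    from nn_integral_real_affine[OF this, where c=1 and t=x]
    show "ennreal (?n0 x) * (\<integral>\<^sup>+y. ennreal (?n1 y) * f (x, y) \<partial>lborel)
        = ennreal (?n0 x) * (\<integral>\<^sup>+d. ennreal (?n1 (x + d)) * f (x, x + d) \<partial>lborel)"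
      by simp
  qed
  also have "\<dots> = (\<integral>\<^sup>+x. \<integral>\<^sup>+d. ennreal (?n0 x * ?n1 (x + d)) * f (x, x + d) \<partial>lborel \<partial>lborel)"
    by (intro nn_integral_cong) (simp add: nn_integral_cmult[symmetric] ennreal_mult mult.assoc)
  also have "\<dots> = (\<integral>\<^sup>+d. \<integral>\<^sup>+x. ennreal (?n0 x * ?n1 (x + d)) * f (x, x + d) \<partial>lborel \<partial>lborel)"
    by (rule lborel_pair.Fubini') measurable
  also have "\<dots> = ?rhs"
    unfolding normal_density_mult_shift[OF assms(1,2)]
    by (intro nn_integral_cong) (simp add: nn_integral_cmult[symmetric] ennreal_mult mult.assoc)
  finally show ?thesis .
qed

section \<open>Soft thresholding\<close>

definition clip :: "real \<Rightarrow> real \<Rightarrow> real" where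
  "clip r d = (if \<bar>d\<bar> \<le> r then d else r * sgn d)"

lemma clip_measurable [measurable]: "clip r \<in> borel_measurable borel"
  unfolding clip_def by measurable

lemma clip_mono: "0 \<le> r \<Longrightarrow> d \<le> e \<Longrightarrow> clip r d \<le> clip r e"
  unfolding clip_def by (auto simp: sgn_if abs_if)

lemma clip_scale: "0 < s \<Longrightarrow> clip (s * r) (s * d) = s * clip r d"
  unfolding clip_def by (auto simp: abs_mult sgn_mult)

lemma clip_below: "0 \<le> r \<Longrightarrow> d \<le> - r \<Longrightarrow> clip r d = - r"
  unfolding clip_def by (auto simp: sgn_if)

lemma clip_within: "\<bar>d\<bar> \<le> r \<Longrightarrow> clip r d = d"
  unfolding clip_def by simp

lemma clip_above: "0 \<le> r \<Longrightarrow> r \<le> d \<Longrightarrow> clip r d = r"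
  unfolding clip_def by (auto simp: sgn_if)

lemma tau_ST_eq_clip:
  assumes "s1 \<noteq> 0"
  shows "tau_ST s0 s1 \<alpha> x0 x1
    = x0 + s0\<^sup>2 / (s0\<^sup>2 + s1\<^sup>2) * clip (sqrt (s0\<^sup>2 + s1\<^sup>2) * cq (\<alpha> / 2)) (x1 - x0)"
proof -
  have "s0\<^sup>2 / s1\<^sup>2 / (1 + s0\<^sup>2 / s1\<^sup>2) = s0\<^sup>2 / (s0\<^sup>2 + s1\<^sup>2)"
    using assms by (simp add: field_simps)
  then show ?thesis
    unfolding tau_ST_def clip_def Let_def by auto
qed

definition soft_threshold_bias :: "real \<Rightarrow> real \<Rightarrow> real \<Rightarrow> real \<Rightarrow> real" where
  "soft_threshold_bias \<gamma> c a u = sqrt \<gamma> * (clip c (a + u) - u)"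

lemma soft_threshold_bias_measurable [measurable]:
  "soft_threshold_bias \<gamma> c a \<in> borel_measurable borel"
  unfolding soft_threshold_bias_def by measurable

lemma soft_threshold_bias_mono:
  "0 \<le> \<gamma> \<Longrightarrow> 0 \<le> c \<Longrightarrow> a \<le> a' \<Longrightarrow> soft_threshold_bias \<gamma> c a u \<le> soft_threshold_bias \<gamma> c a' u"
  unfolding soft_threshold_bias_def by (intro mult_left_mono diff_right_mono clip_mono) auto

lemma soft_threshold_bias_below:
  "0 \<le> c \<Longrightarrow> u \<le> - c - a \<Longrightarrow> soft_threshold_bias \<gamma> c a u = - sqrt \<gamma> * (u + c)"
  unfolding soft_threshold_bias_def by (subst clip_below) (auto simp: algebra_simps)

lemma soft_threshold_bias_within:
  "\<bar>a + u\<bar> \<le> c \<Longrightarrow> soft_threshold_bias \<gamma> c a u = sqrt \<gamma> * a"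
  unfolding soft_threshold_bias_def by (simp add: clip_within)

lemma soft_threshold_bias_above:
  "0 \<le> c \<Longrightarrow> c - a \<le> u \<Longrightarrow> soft_threshold_bias \<gamma> c a u = sqrt \<gamma> * (c - u)"
  unfolding soft_threshold_bias_def by (subst clip_above) (auto simp: algebra_simps)

lemma integral_split_at_two_points:
  fixes f :: "real \<Rightarrow> real"
  assumes "integrable lborel f" "p < q"
  shows "integral\<^sup>L lborel f
    = (LINT u:{..p}|lborel. f u) + (LINT u:{p<..<q}|lborel. f u) + (LINT u:{q..}|lborel. f u)"
proof -
  have "integral\<^sup>L lborel f
      = (\<integral>u. f u * indicator {..p} u + f u * indicator {p<..<q} u + f u * indicator {q..} u \<partial>lborel)"
    using assms(2) by (intro Bochner_Integration.integral_cong) (auto simp: indicator_def)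
  also have "\<dots> = (LINT u:{..p}|lborel. f u) + (LINT u:{p<..<q}|lborel. f u) + (LINT u:{q..}|lborel. f u)"
    using integrable_real_mult_indicator[OF _ assms(1)]
    by (simp add: set_lebesgue_integral_def mult.commute)
  finally show ?thesis .
qed

lemma normal_mixture_cdf_soft_threshold_bias:
  assumes "c > 0"
  shows "normal_mixture_cdf (soft_threshold_bias \<gamma> c a) L
    = (Phi (c - a) - Phi (- c - a)) * Phi (L - sqrt \<gamma> * a)
      + (LINT u:{.. - c - a}|lborel. Phi (L + sqrt \<gamma> * (u + c)) * phi u)
      + (LINT u:{c - a ..}|lborel. Phi (L + sqrt \<gamma> * (u - c)) * phi u)"
proof -
  let ?f = "\<lambda>u. Phi (L - soft_threshold_bias \<gamma> c a u) * std_normal_density u"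
  have "normal_mixture_cdf (soft_threshold_bias \<gamma> c a) L
      = (LINT u:{.. - c - a}|lborel. ?f u) + (LINT u:{- c - a <..< c - a}|lborel. ?f u)
        + (LINT u:{c - a ..}|lborel. ?f u)"
    unfolding normal_mixture_cdf_lborel[OF soft_threshold_bias_measurable]
    using assms by (intro integral_split_at_two_points integrable_Phi_mult_std_normal_density) auto
  also have "(LINT u:{.. - c - a}|lborel. ?f u) = (LINT u:{.. - c - a}|lborel. Phi (L + sqrt \<gamma> * (u + c)) * phi u)"
    using assms by (intro set_lebesgue_integral_cong) (auto simp: soft_threshold_bias_below phi_def)
  also have "(LINT u:{- c - a <..< c - a}|lborel. ?f u)
      = (LINT u:{- c - a <..< c - a}|lborel. Phi (L - sqrt \<gamma> * a) * std_normal_density u)"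
    by (intro set_lebesgue_integral_cong) (auto simp: soft_threshold_bias_within)
  also have "\<dots> = (Phi (c - a) - Phi (- c - a)) * Phi (L - sqrt \<gamma> * a)"
    using assms by (simp add: set_integral_std_normal_density measure_std_normal_greaterThanLessThan)
  also have "(LINT u:{c - a ..}|lborel. ?f u) = (LINT u:{c - a ..}|lborel. Phi (L + sqrt \<gamma> * (u - c)) * phi u)"
    using assms by (intro set_lebesgue_integral_cong) (auto simp: soft_threshold_bias_above phi_def algebra_simps)
  finally show ?thesis by simp
qed

section \<open>Coverage probability of the lower confidence bound\<close>

lemma emeasure_obs_law_threshold:
  fixes s0 s1 :: real
  assumes "s0 > 0" "s1 > 0" and [measurable]: "B \<in> borel_measurable borel"
  defines "\<sigma> \<equiv> sqrt (s0\<^sup>2 + s1\<^sup>2)"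
  defines "w \<equiv> s0\<^sup>2 / (s0\<^sup>2 + s1\<^sup>2)"
  defines "v \<equiv> s0 * s1 / sqrt (s0\<^sup>2 + s1\<^sup>2)"
  shows "emeasure (obs_law s0 s1 \<tau> \<Delta>) {p. fst p \<le> B (snd p - fst p)}
    = (\<integral>\<^sup>+u. ennreal (std_normal_density u) * ennreal (Phi ((B (\<Delta> + \<sigma> * u) - (\<tau> - w * (\<sigma> * u))) / v)) \<partial>lborel)"
proof -
  define S where "S = {p :: real \<times> real. fst p \<le> B (snd p - fst p)}"
  have "{p \<in> space (borel \<Otimes>\<^sub>M borel). fst p \<le> B (snd p - fst p)} \<in> sets (borel \<Otimes>\<^sub>M borel)"
    by measurable
  then have S_sets: "S \<in> sets (obs_law s0 s1 \<tau> \<Delta>)"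
    by (simp add: S_def obs_law_def space_pair_measure cong: sets_pair_measure_cong)
  have "\<sigma> > 0" "v > 0"
    using assms by (simp_all add: \<sigma>_def v_def add_pos_nonneg)
  have "emeasure (obs_law s0 s1 \<tau> \<Delta>) S = (\<integral>\<^sup>+p. indicator S p \<partial>obs_law s0 s1 \<tau> \<Delta>)"
    using S_sets by simp
  also have "\<dots> = (\<integral>\<^sup>+d. ennreal (normal_density \<Delta> \<sigma> d)
      * (\<integral>\<^sup>+x. ennreal (normal_density (\<tau> - w * (d - \<Delta>)) v x) * indicator S (x, x + d) \<partial>lborel) \<partial>lborel)"
    unfolding obs_law_def \<sigma>_def v_def w_def
    by (rule nn_integral_normal_pair_by_difference[OF assms(1,2)]) (simp add: S_def)
  also have "\<dots> = (\<integral>\<^sup>+d. ennreal (normal_density \<Delta> \<sigma> d)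
      * (\<integral>\<^sup>+x. ennreal (normal_density (\<tau> - w * (d - \<Delta>)) v x) * indicator {..B d} x \<partial>lborel) \<partial>lborel)"
    by (simp add: S_def indicator_def)
  also have "\<dots> = (\<integral>\<^sup>+d. ennreal (normal_density \<Delta> \<sigma> d)
      * ennreal (Phi ((B d - (\<tau> - w * (d - \<Delta>))) / v)) \<partial>lborel)"
    using \<open>v > 0\<close> by (simp add: nn_integral_normal_density_atMost)
  also have "\<dots> = (\<integral>\<^sup>+u. ennreal (std_normal_density u) * ennreal (Phi ((B (\<Delta> + \<sigma> * u) - (\<tau> - w * (\<sigma> * u))) / v)) \<partial>lborel)"
    using \<open>\<sigma> > 0\<close> by (subst nn_integral_normal_density_affine) simp_all
  finally show ?thesis
    by (simp only: S_def)
qed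

lemma cover_prob_eq_normal_mixture_cdf:
  assumes "s0 > 0" "s1 > 0"
  shows "cover_prob s0 s1 \<alpha> \<tau> \<Delta> L
    = normal_mixture_cdf (soft_threshold_bias (s0\<^sup>2 / s1\<^sup>2) (cq (\<alpha> / 2)) (\<Delta> / sqrt (s0\<^sup>2 + s1\<^sup>2))) L"
proof -
  define \<sigma> where "\<sigma> = sqrt (s0\<^sup>2 + s1\<^sup>2)"
  define w where "w = s0\<^sup>2 / (s0\<^sup>2 + s1\<^sup>2)"
  define v where "v = s0 * s1 / \<sigma>"
  define g where "g = soft_threshold_bias (s0\<^sup>2 / s1\<^sup>2) (cq (\<alpha> / 2)) (\<Delta> / \<sigma>)"
  define B where "B d = \<tau> + L * v - w * clip (\<sigma> * cq (\<alpha> / 2)) d" for d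
  have "\<sigma> > 0" "v > 0" "\<sigma>\<^sup>2 = s0\<^sup>2 + s1\<^sup>2"
    using assms by (simp_all add: \<sigma>_def v_def add_pos_nonneg)
  have "sqrt (1 + s0\<^sup>2 / s1\<^sup>2) = \<sigma> / s1"
    using assms \<open>\<sigma> > 0\<close> \<open>\<sigma>\<^sup>2 = _\<close> by (intro real_sqrt_unique) (simp_all add: power_divide field_simps)
  then have event: "{p. tau_ST s0 s1 \<alpha> (fst p) (snd p) - \<tau> \<le> L * s0 / sqrt (1 + s0\<^sup>2 / s1\<^sup>2)}
      = {p. fst p \<le> B (snd p - fst p)}"
    using assms by (auto simp: tau_ST_eq_clip B_def v_def w_def \<sigma>_def)
  have standardize: "(B (\<Delta> + \<sigma> * u) - (\<tau> - w * (\<sigma> * u))) / v = L - g u" for u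
  proof -
    have "clip (\<sigma> * cq (\<alpha> / 2)) (\<Delta> + \<sigma> * u) = \<sigma> * clip (cq (\<alpha> / 2)) (\<Delta> / \<sigma> + u)"
      using \<open>\<sigma> > 0\<close> clip_scale[of \<sigma> "cq (\<alpha> / 2)" "\<Delta> / \<sigma> + u"] by (simp add: algebra_simps)
    then have "B (\<Delta> + \<sigma> * u) - (\<tau> - w * (\<sigma> * u))
        = L * v - (w * \<sigma>) * (clip (cq (\<alpha> / 2)) (\<Delta> / \<sigma> + u) - u)"
      by (simp add: B_def algebra_simps)
    also have "w * \<sigma> = s0\<^sup>2 / \<sigma>"
      unfolding w_def \<open>\<sigma>\<^sup>2 = _\<close>[symmetric] using \<open>\<sigma> > 0\<close> by (simp add: power2_eq_square)
    also have "\<dots> = sqrt (s0\<^sup>2 / s1\<^sup>2) * v"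
      unfolding v_def using assms by (simp add: real_sqrt_divide power2_eq_square)
    also have "L * v - sqrt (s0\<^sup>2 / s1\<^sup>2) * v * (clip (cq (\<alpha> / 2)) (\<Delta> / \<sigma> + u) - u) = v * (L - g u)"
      by (simp add: g_def soft_threshold_bias_def algebra_simps)
    finally show ?thesis
      using \<open>v > 0\<close> by simp
  qed
  have "emeasure (obs_law s0 s1 \<tau> \<Delta>) {p. fst p \<le> B (snd p - fst p)}
      = (\<integral>\<^sup>+u. ennreal (std_normal_density u) * ennreal (Phi ((B (\<Delta> + \<sigma> * u) - (\<tau> - w * (\<sigma> * u))) / v)) \<partial>lborel)"
    unfolding \<sigma>_def w_def v_def by (rule emeasure_obs_law_threshold[OF assms]) (simp add: B_def)
  also have "\<dots> = (\<integral>\<^sup>+u. ennreal (Phi (L - g u)) \<partial>std_normal_distribution)"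
    by (subst nn_integral_density) (simp_all add: g_def standardize)
  also have "\<dots> = ennreal (normal_mixture_cdf g L)"
    unfolding normal_mixture_cdf_def
    by (rule nn_integral_eq_integral) (simp_all add: g_def Phi_nonneg)
  finally show ?thesis
    unfolding cover_prob_def measure_def event g_def \<sigma>_def
    by (simp add: normal_mixture_cdf_def Phi_nonneg)
qed

lemma cover_prob_antimono:
  assumes "s0 > 0" "s1 > 0" "0 < \<alpha>" "\<alpha> < 1" "\<Delta>1 \<le> \<Delta>2"
  shows "cover_prob s0 s1 \<alpha> \<tau> \<Delta>2 L \<le> cover_prob s0 s1 \<alpha> \<tau> \<Delta>1 L"
  unfolding cover_prob_eq_normal_mixture_cdf[OF assms(1,2)]
  using assms cq_pos[of "\<alpha> / 2"]
  by (intro normal_mixture_cdf_antimono soft_threshold_bias_mono divide_right_mono) auto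

lemma cover_prob_strict_mono:
  assumes "s0 > 0" "s1 > 0"
  shows "strict_mono (cover_prob s0 s1 \<alpha> \<tau> \<Delta>)"
  using normal_mixture_cdf_strict_mono[OF soft_threshold_bias_measurable]
  by (simp add: cover_prob_eq_normal_mixture_cdf[OF assms] strict_mono_def)

lemma cover_prob_ex1_eq:
  assumes "s0 > 0" "s1 > 0" "0 < p" "p < 1"
  shows "\<exists>!L. cover_prob s0 s1 \<alpha> \<tau> \<Delta> L = p"
  using normal_mixture_cdf_ex1_eq[OF soft_threshold_bias_measurable assms(3,4)]
  by (simp add: cover_prob_eq_normal_mixture_cdf[OF assms(1,2)])

lemma cover_prob_formula:
  assumes "s0 > 0" "s1 > 0" "0 < \<alpha>" "\<alpha> < 1"
  defines "\<gamma> \<equiv> s0\<^sup>2 / s1\<^sup>2"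
  defines "c \<equiv> cq (\<alpha> / 2)"
  shows "cover_prob s0 s1 \<alpha> \<tau> (t * s0) L =
        (Phi (c - sqrt (\<gamma> / (1 + \<gamma>)) * t) - Phi (- c - sqrt (\<gamma> / (1 + \<gamma>)) * t))
          * Phi (L - \<gamma> / sqrt (1 + \<gamma>) * t)
        + (LINT u:{.. - c - sqrt (\<gamma> / (1 + \<gamma>)) * t}|lborel. Phi (L + sqrt \<gamma> * (u + c)) * phi u)
        + (LINT u:{c - sqrt (\<gamma> / (1 + \<gamma>)) * t ..}|lborel. Phi (L + sqrt \<gamma> * (u - c)) * phi u)"
proof -
  define \<sigma> where "\<sigma> = sqrt (s0\<^sup>2 + s1\<^sup>2)"
  define a where "a = t * s0 / \<sigma>"
  have "\<sigma> > 0" "\<sigma>\<^sup>2 = s0\<^sup>2 + s1\<^sup>2"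
    using assms by (simp_all add: \<sigma>_def add_pos_nonneg)
  have "sqrt (\<gamma> / (1 + \<gamma>)) = s0 / \<sigma>"
    using assms \<open>\<sigma> > 0\<close> \<open>\<sigma>\<^sup>2 = _\<close>
    by (intro real_sqrt_unique) (simp_all add: \<gamma>_def power_divide field_simps)
  then have a_eq: "a = sqrt (\<gamma> / (1 + \<gamma>)) * t"
    by (simp add: a_def)
  have "sqrt (1 + \<gamma>) = \<sigma> / s1"
    using assms \<open>\<sigma> > 0\<close> \<open>\<sigma>\<^sup>2 = _\<close>
    by (intro real_sqrt_unique) (simp_all add: \<gamma>_def power_divide field_simps)
  moreover have "sqrt \<gamma> = s0 / s1"
    using assms by (simp add: \<gamma>_def real_sqrt_divide)
  ultimately have shift_eq: "sqrt \<gamma> * a = \<gamma> / sqrt (1 + \<gamma>) * t"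
    using assms \<open>\<sigma> > 0\<close> by (simp add: a_def \<gamma>_def power2_eq_square)
  have "cover_prob s0 s1 \<alpha> \<tau> (t * s0) L = normal_mixture_cdf (soft_threshold_bias \<gamma> c a) L"
    unfolding cover_prob_eq_normal_mixture_cdf[OF assms(1,2)] \<gamma>_def c_def a_def \<sigma>_def ..
  also have "\<dots> = (Phi (c - a) - Phi (- c - a)) * Phi (L - sqrt \<gamma> * a)
      + (LINT u:{.. - c - a}|lborel. Phi (L + sqrt \<gamma> * (u + c)) * phi u)
      + (LINT u:{c - a ..}|lborel. Phi (L + sqrt \<gamma> * (u - c)) * phi u)"
    using assms cq_pos[of "\<alpha> / 2"] by (intro normal_mixture_cdf_soft_threshold_bias) simp
  finally show ?thesis
    unfolding a_eq[symmetric] shift_eq[symmetric] .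
qed

theorem theorem15:
  fixes s0 s1 \<alpha> \<zeta> b \<tau> :: real
  assumes "s0 > 0" and "s1 > 0"
    and "0 < \<alpha>" and "\<alpha> < 1" and "0 < \<zeta>" and "\<zeta> < 1" and "b \<ge> 0"
  defines "\<gamma> \<equiv> s0\<^sup>2 / s1\<^sup>2"
  defines "c \<equiv> cq (\<alpha> / 2)"
  shows
    "(\<forall>L > 0. \<forall>\<Delta>1 \<Delta>2. \<Delta>1 \<le> \<Delta>2 \<longrightarrow>
        cover_prob s0 s1 \<alpha> \<tau> \<Delta>2 L \<le> cover_prob s0 s1 \<alpha> \<tau> \<Delta>1 L)
   \<and> (\<forall>t L. cover_prob s0 s1 \<alpha> \<tau> (t * s0) L =
        (Phi (c - sqrt (\<gamma> / (1 + \<gamma>)) * t) - Phi (- c - sqrt (\<gamma> / (1 + \<gamma>)) * t))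
          * Phi (L - \<gamma> / sqrt (1 + \<gamma>) * t)
        + (LINT u:{.. - c - sqrt (\<gamma> / (1 + \<gamma>)) * t}|lborel. Phi (L + sqrt \<gamma> * (u + c)) * phi u)
        + (LINT u:{c - sqrt (\<gamma> / (1 + \<gamma>)) * t ..}|lborel. Phi (L + sqrt \<gamma> * (u - c)) * phi u))
   \<and> (\<exists>!L'. cover_prob s0 s1 \<alpha> \<tau> (b * s0) L' = 1 - \<zeta>)
   \<and> (\<forall>L'. cover_prob s0 s1 \<alpha> \<tau> (b * s0) L' = 1 - \<zeta> \<longrightarrow>
        (\<forall>\<Delta>. \<bar>\<Delta> / s0\<bar> \<le> b \<longrightarrow> cover_prob s0 s1 \<alpha> \<tau> \<Delta> L' \<ge> 1 - \<zeta>)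
      \<and> (\<forall>L. (\<forall>\<Delta>. \<bar>\<Delta> / s0\<bar> \<le> b \<longrightarrow> cover_prob s0 s1 \<alpha> \<tau> \<Delta> L \<ge> 1 - \<zeta>) \<longrightarrow> L' \<le> L))"
proof -
  have antimono: "\<forall>L > 0. \<forall>\<Delta>1 \<Delta>2. \<Delta>1 \<le> \<Delta>2 \<longrightarrow>
      cover_prob s0 s1 \<alpha> \<tau> \<Delta>2 L \<le> cover_prob s0 s1 \<alpha> \<tau> \<Delta>1 L"
    using cover_prob_antimono[OF assms(1-4)] by blast
  note formula = cover_prob_formula[OF assms(1-4), folded \<gamma>_def c_def]
  have unique: "\<exists>!L'. cover_prob s0 s1 \<alpha> \<tau> (b * s0) L' = 1 - \<zeta>"
    using assms(5,6) by (intro cover_prob_ex1_eq[OF assms(1,2)]) simp_all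
  have covers: "cover_prob s0 s1 \<alpha> \<tau> \<Delta> L' \<ge> 1 - \<zeta>"
    if "cover_prob s0 s1 \<alpha> \<tau> (b * s0) L' = 1 - \<zeta>" and "\<bar>\<Delta> / s0\<bar> \<le> b" for \<Delta> L'
  proof -
    have "\<Delta> \<le> b * s0"
      using that(2) assms(1) by (simp add: abs_le_iff divide_le_eq)
    then show ?thesis
      using cover_prob_antimono[OF assms(1-4)] that(1) by metis
  qed
  have shortest: "L' \<le> L"
    if "cover_prob s0 s1 \<alpha> \<tau> (b * s0) L' = 1 - \<zeta>"
      and "\<forall>\<Delta>. \<bar>\<Delta> / s0\<bar> \<le> b \<longrightarrow> cover_prob s0 s1 \<alpha> \<tau> \<Delta> L \<ge> 1 - \<zeta>" for L L'
  proof -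
    have "cover_prob s0 s1 \<alpha> \<tau> (b * s0) L' \<le> cover_prob s0 s1 \<alpha> \<tau> (b * s0) L"
      using that assms(1,7) by simp
    then show ?thesis
      using strict_mono_less_eq[OF cover_prob_strict_mono[OF assms(1,2)]] by blast
  qed
  show ?thesis
    using antimono formula unique covers shortest by blast
qed

end
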